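(* Let $\mathbb{X},\mathbb{Y}$ be finite-dimensional real polyhedral Banach spaces and let $T\in\mathbb{L}(\mathbb{X},\mathbb{Y})$ be bijective. Then the following are equivalent: (a) $T$ preserves parallel pairs; (b) $T$ preserves TEA pairs; (c) for each $f\in\mathrm{Ext}\,B_{\mathbb{X}^*}$ there exists a unique $g\in\mathrm{Ext}\,B_{\mathbb{Y}^*}$ such that $T(\mathrm{Sm}(f))\subset\mathrm{Sm}(g)$.
   Context: A finite-dimensional Banach space is polyhedral if its unit ball has finitely many extreme points. $\mathrm{Ext}\,B_{\mathbb{X}^*}$ is the set of extreme points of the dual unit ball. For non-zero $x$, $J(x)=\{f\in S_{\mathbb{X}^*}: f(x)=\|x\|\}$. For $f\in\mathrm{Ext}\,B_{\mathbb{X}^*}$, $\mathrm{Sm}(f)=\{x\in\mathbb{X}: J(x)=\{f\}\}$. $(x,y)$ is a parallel pair if $\|x+\lambda y\|=\|x\|+\|y\|$ for some $\lambda$ with $|\lambda|=1$; a TEA pair if $\|x+y\|=\|x\|+\|y\|$. $T$ preserves parallel (resp. TEA) pairs if $(x,y)$ parallel (resp. TEA) in $\mathbb{X}$ implies $(Tx,Ty)$ parallel (resp. TEA) in $\mathbb{Y}$. *)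

theory Defs
  imports "HOL-Analysis.Analysis"
begin

definition fin_dim_space :: "'a::real_normed_vector itself \<Rightarrow> bool" where
  "fin_dim_space _ \<longleftrightarrow> (\<exists>B::'a set. finite B \<and> span B = UNIV)"

definition polyhedral :: "'a::real_normed_vector itself \<Rightarrow> bool" where
  "polyhedral _ \<longleftrightarrow> finite {x::'a. x extreme_point_of cball 0 1}"

definition dual_ball :: "('a::real_normed_vector \<Rightarrow> real) set" where
  "dual_ball = {f. bounded_linear f \<and> onorm f \<le> 1}"

definition dual_sphere :: "('a::real_normed_vector \<Rightarrow> real) set" where
  "dual_sphere = {f. bounded_linear f \<and> onorm f = 1}"

definition dual_ext :: "('a::real_normed_vector \<Rightarrow> real) set" where
  "dual_ext = {f \<in> dual_ball. \<forall>g\<in>dual_ball. \<forall>h\<in>dual_ball. \<forall>t::real.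
      0 < t \<and> t < 1 \<and> f = (\<lambda>x. t * g x + (1 - t) * h x) \<longrightarrow> g = h}"

definition supp_funcs :: "'a::real_normed_vector \<Rightarrow> ('a \<Rightarrow> real) set" ("J") where
  "J x = {f \<in> dual_sphere. f x = norm x}"

definition Sm :: "('a::real_normed_vector \<Rightarrow> real) \<Rightarrow> 'a set" where
  "Sm f = {x. x \<noteq> 0 \<and> J x = {f}}"

definition parallel_pair :: "'a::real_normed_vector \<Rightarrow> 'a \<Rightarrow> bool" where
  "parallel_pair x y \<longleftrightarrow> (\<exists>c::real. \<bar>c\<bar> = 1 \<and> norm (x + c *\<^sub>R y) = norm x + norm y)"

definition TEA_pair :: "'a::real_normed_vector \<Rightarrow> 'a \<Rightarrow> bool" where
  "TEA_pair x y \<longleftrightarrow> norm (x + y) = norm x + norm y"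

end

theory Submission
  imports Defs
begin

(* In coordinates, the dual unit ball of a finite-dimensional polyhedral space is a polytope whose
   vertices are the extreme functionals. For such a vertex f, Sm f is the open convex cone on which
   f is the unique largest vertex functional; these cones are dense, and a TEA pair x, y lies in the
   closure of the cone of any extreme functional norming x + y. Hence T preserves TEA pairs as soon
   as, for every f, a single functional norms all of T (Sm f); under (c) this is immediate.
   Under (a), the open set T (Sm f) meets some Sm g; parallelism gives |g (T z)| = norm (T z) on
   Sm f, and convexity of Sm f excludes the sign -1. Under (b), a point of Sm f whose image is
   normed by two extreme functionals g1, g2 would let T (Sm f) meet both Sm g1 and Sm g2, and the
   preimages, a TEA pair, would be mapped to a pair that is not TEA; so T maps Sm f into a single
   class. Finally (b) gives (a) because a parallel pair is a TEA pair up to a sign. *)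

section \<open>Support functionals, smooth points and TEA pairs\<close>

lemma dual_ball_abs_le_norm:
  assumes "f \<in> dual_ball"
  shows "\<bar>f x\<bar> \<le> norm x"
proof -
  have "bounded_linear f" and "onorm f \<le> 1"
    using assms by (auto simp: dual_ball_def)
  then have "norm (f x) \<le> 1 * norm x"
    by (meson onorm order_trans mult_right_mono norm_ge_zero)
  then show ?thesis
    by simp
qed

lemma dual_ball_le_norm: "f \<in> dual_ball \<Longrightarrow> f x \<le> norm x"
  using dual_ball_abs_le_norm[of f x] by linarith

lemma dual_ball_linear: "f \<in> dual_ball \<Longrightarrow> linear f"
  by (simp add: dual_ball_def bounded_linear.linear)

lemma dual_ext_subset_dual_ball: "dual_ext \<subseteq> dual_ball"
  by (auto simp: dual_ext_def)

lemma supp_funcsD: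
  assumes "f \<in> J x"
  shows "f \<in> dual_ball" and "f x = norm x"
  using assms by (auto simp: supp_funcs_def dual_sphere_def dual_ball_def)

lemma supp_funcsI:
  assumes "f \<in> dual_ball" and "x \<noteq> 0" and "f x = norm x"
  shows "f \<in> J x"
proof -
  have bl: "bounded_linear f" and "onorm f \<le> 1"
    using assms(1) by (auto simp: dual_ball_def)
  moreover have "norm (f x) / norm x \<le> onorm f"
    by (rule le_onorm[OF bl])
  then have "1 \<le> onorm f"
    using assms(2,3) by simp
  ultimately show ?thesis
    using assms(3) by (simp add: supp_funcs_def dual_sphere_def)
qed

lemma TEA_pairI_norming:
  assumes "f \<in> dual_ball" and "f x = norm x" and "f y = norm y"
  shows "TEA_pair x y"
proof -
  have "norm x + norm y = f (x + y)"
    using assms by (simp add: linear_add[OF dual_ball_linear])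
  also have "\<dots> \<le> norm (x + y)"
    by (rule dual_ball_le_norm[OF assms(1)])
  finally show ?thesis
    using norm_triangle_ineq[of x y] by (simp add: TEA_pair_def)
qed

lemma supp_funcs_TEA_pair_sum:
  assumes "TEA_pair x y" and "f \<in> J (x + y)"
  shows "f \<in> J x" and "f \<in> J y"
proof -
  have f: "f \<in> dual_ball" "f (x + y) = norm (x + y)"
    using supp_funcsD[OF assms(2)] by auto
  then have "f x + f y = norm x + norm y"
    using assms(1) by (simp add: TEA_pair_def linear_add[OF dual_ball_linear])
  moreover have "f x \<le> norm x" and "f y \<le> norm y"
    using dual_ball_le_norm[OF f(1)] by auto
  ultimately have "f x = norm x" and "f y = norm y"
    by linarith+
  then show "f \<in> J x" and "f \<in> J y"
    using assms(2) by (auto simp: supp_funcs_def)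
qed

lemma TEA_pair_sum_eq_0:
  assumes "TEA_pair x y" and "x + y = 0"
  shows "x = 0" and "y = 0"
proof -
  have "norm x + norm y = 0"
    using assms by (simp add: TEA_pair_def)
  then show "x = 0" and "y = 0"
    by (simp_all add: add_nonneg_eq_0_iff)
qed

lemma parallel_pair_iff_TEA_pair: "parallel_pair x y \<longleftrightarrow> (\<exists>c. \<bar>c\<bar> = 1 \<and> TEA_pair x (c *\<^sub>R y))"
  by (auto simp: parallel_pair_def TEA_pair_def)

lemma SmD:
  assumes "x \<in> Sm f"
  shows "x \<noteq> 0" and "J x = {f}" and "f \<in> dual_ball" and "f x = norm x"
  using assms supp_funcsD[of f x] by (auto simp: Sm_def)

lemma TEA_pair_Sm: "x \<in> Sm f \<Longrightarrow> y \<in> Sm f \<Longrightarrow> TEA_pair x y"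
  by (metis SmD(3,4) TEA_pairI_norming)

lemma convex_Sm: "convex (Sm f)"
  unfolding convex_alt
proof (intro ballI allI impI)
  fix x y and t :: real
  assume x: "x \<in> Sm f" and y: "y \<in> Sm f" and t: "0 \<le> t \<and> t \<le> 1"
  define z where "z = (1 - t) *\<^sub>R x + t *\<^sub>R y"
  have f: "f \<in> dual_ball" "f x = norm x" "f y = norm y"
    using SmD[OF x] SmD[OF y] by auto
  have f_z: "f z = (1 - t) * norm x + t * norm y"
    using f by (simp add: z_def linear_add[OF dual_ball_linear] linear_scale[OF dual_ball_linear])
  moreover have "norm z \<le> (1 - t) * norm x + t * norm y"
    using norm_triangle_ineq[of "(1 - t) *\<^sub>R x" "t *\<^sub>R y"] t by (simp add: z_def)
  moreover have "f z \<le> norm z"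
    by (rule dual_ball_le_norm[OF f(1)])
  ultimately have norm_z: "norm z = (1 - t) * norm x + t * norm y"
    by linarith
  have "0 < (1 - t) * norm x + t * norm y"
    using t SmD(1)[OF x] SmD(1)[OF y]
    by (cases "t = 0") (auto intro: add_nonneg_pos add_pos_nonneg)
  then have "z \<noteq> 0"
    using norm_z by auto
  have "J z \<subseteq> {f}"
  proof
    fix h
    assume h: "h \<in> J z"
    have hb: "h \<in> dual_ball" "h z = norm z"
      using supp_funcsD[OF h] by auto
    have "h z = (1 - t) * h x + t * h y"
      by (simp add: z_def linear_add[OF dual_ball_linear[OF hb(1)]] linear_scale[OF dual_ball_linear[OF hb(1)]])
    then have "(1 - t) * (norm x - h x) + t * (norm y - h y) = 0"
      using hb(2) norm_z by (simp add: algebra_simps)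
    moreover have "0 \<le> (1 - t) * (norm x - h x)" and "0 \<le> t * (norm y - h y)"
      using t dual_ball_le_norm[OF hb(1)] by simp_all
    ultimately have "(1 - t) * (norm x - h x) = 0" and "t * (norm y - h y) = 0"
      by linarith+
    then have "h x = norm x \<or> h y = norm y"
      by (cases "t = 0") auto
    then have "h \<in> J x \<or> h \<in> J y"
      using h by (auto simp: supp_funcs_def)
    then show "h \<in> {f}"
      using SmD(2)[OF x] SmD(2)[OF y] by blast
  qed
  moreover have "f \<in> J z"
    using SmD(2)[OF x] f_z norm_z by (auto simp: supp_funcs_def)
  ultimately show "(1 - t) *\<^sub>R x + t *\<^sub>R y \<in> Sm f"
    using \<open>z \<noteq> 0\<close> by (auto simp: Sm_def z_def)
qed

lemma linear_inv_bij:
  assumes "linear f" and "bij f"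
  shows "linear (inv f)"
proof -
  obtain g where g: "linear g" "f \<circ> g = id"
    using linear_surjective_right_inverse[OF assms(1) bij_is_surj[OF assms(2)]] by blast
  have "inv f = g"
  proof
    show "inv f y = g y" for y
      using g(2) bij_inv_eq_iff[OF assms(2)] by (metis comp_apply id_apply)
  qed
  with g(1) show ?thesis
    by simp
qed

lemma linear_inj_bounded_below_pos_euclidean:
  fixes f :: "'a::euclidean_space \<Rightarrow> 'b::real_normed_vector"
  assumes "linear f" and "inj f"
  obtains B where "B > 0" and "\<And>x. B * norm x \<le> norm (f x)"
proof -
  have "continuous_on (sphere 0 1) (\<lambda>x. norm (f x))"
    using assms(1) by (intro continuous_intros linear_continuous_on) (simp add: linear_conv_bounded_linear)
  moreover obtain b :: 'a where "b \<in> Basis"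
    using nonempty_Basis by blast
  then have "sphere (0::'a) 1 \<noteq> {}"
    by (auto simp: dist_norm)
  ultimately obtain x0 where x0: "x0 \<in> sphere 0 1" "\<And>x. x \<in> sphere 0 1 \<Longrightarrow> norm (f x0) \<le> norm (f x)"
    using continuous_attains_inf[OF compact_sphere] by metis
  show ?thesis
  proof
    have "f x0 \<noteq> f 0"
      using x0(1) assms(2) by (auto dest: injD)
    then show "norm (f x0) > 0"
      by (simp add: linear_0[OF assms(1)])
    fix x
    show "norm (f x0) * norm x \<le> norm (f x)"
    proof (cases "x = 0")
      case False
      then have "norm (f x0) \<le> norm (f (x /\<^sub>R norm x))"
        by (intro x0(2)) simp
      also have "\<dots> = norm (f x) / norm x"
        by (simp add: linear_scale[OF assms(1)] divide_inverse_commute)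
      finally show ?thesis
        using False by (simp add: field_simps)
    qed (simp add: linear_0[OF assms(1)])
  qed
qed

section \<open>Coordinates for the dual ball\<close>

locale linear_coordinates =
  fixes coord :: "'a::real_normed_vector \<Rightarrow> 'n::euclidean_space"
  assumes linear_coord: "linear coord" and bij_coord: "bij coord"
begin

definition from_coord :: "'n \<Rightarrow> 'a" where
  "from_coord = inv coord"

lemma from_coord_coord [simp]: "from_coord (coord x) = x"
  using bij_coord by (simp add: from_coord_def bij_is_inj)

lemma coord_from_coord [simp]: "coord (from_coord v) = v"
  using bij_coord by (simp add: from_coord_def bij_is_surj surj_f_inv_f)

lemma linear_from_coord: "linear from_coord"
  unfolding from_coord_def by (rule linear_inv_bij[OF linear_coord bij_coord])

lemma bounded_linear_from_coord: "bounded_linear from_coord"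
  using linear_from_coord linear_conv_bounded_linear by blast

lemma bounded_linear_coord: "bounded_linear coord"
proof -
  have "inj from_coord"
    by (metis coord_from_coord injI)
  then obtain B where B: "B > 0" "\<And>v. B * norm v \<le> norm (from_coord v)"
    using linear_inj_bounded_below_pos_euclidean[OF linear_from_coord] by blast
  show ?thesis
  proof (rule bounded_linear_intro[where K = "inverse B"])
    show "coord (x + y) = coord x + coord y" and "coord (r *\<^sub>R x) = r *\<^sub>R coord x" for x y r
      by (simp_all add: linear_add[OF linear_coord] linear_scale[OF linear_coord])
    show "norm (coord x) \<le> norm x * inverse B" for x
      using B(1) B(2)[of "coord x"] by (simp add: field_simps)
  qed
qed

lemma bounded_linear_of_linear:
  fixes f :: "'a \<Rightarrow> 'c::real_normed_vector"
  assumes "linear f"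
  shows "bounded_linear f"
proof -
  have "bounded_linear (f \<circ> from_coord)"
    using linear_compose[OF linear_from_coord assms] linear_conv_bounded_linear by blast
  from bounded_linear_compose[OF this bounded_linear_coord] show ?thesis
    by (simp add: o_def)
qed

definition dual_body :: "'n set" where
  "dual_body = {w. \<forall>x. w \<bullet> coord x \<le> norm x}"

definition dual_functional :: "'n \<Rightarrow> 'a \<Rightarrow> real" where
  "dual_functional w x = w \<bullet> coord x"

definition dual_vertices :: "'n set" where
  "dual_vertices = {w. w extreme_point_of dual_body}"

lemma bounded_linear_dual_functional: "bounded_linear (dual_functional w)"
  unfolding dual_functional_def[abs_def]
  by (rule bounded_linear_compose[OF bounded_linear_inner_right bounded_linear_coord])

lemma dual_functional_in_dual_ball:
  assumes "w \<in> dual_body"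
  shows "dual_functional w \<in> dual_ball"
proof -
  have le: "w \<bullet> coord x \<le> norm x" for x
    using assms by (simp add: dual_body_def)
  have "- (w \<bullet> coord x) \<le> norm x" for x
    using le[of "- x"] by (simp add: linear_neg[OF linear_coord])
  with le have "onorm (dual_functional w) \<le> 1"
    by (intro onorm_bound) (auto simp: dual_functional_def abs_le_iff)
  then show ?thesis
    using bounded_linear_dual_functional by (simp add: dual_ball_def)
qed

lemma inj_dual_functional: "inj dual_functional"
proof (rule injI)
  fix a b
  assume "dual_functional a = dual_functional b"
  then have "a \<bullet> coord (from_coord (a - b)) = b \<bullet> coord (from_coord (a - b))"
    by (metis dual_functional_def)
  then have "(a - b) \<bullet> (a - b) = 0"
    by (simp add: inner_diff_left)
  then show "a = b"
    by simp
qed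

lemma dual_ball_eq_image: "dual_ball = dual_functional ` dual_body"
proof
  show "dual_functional ` dual_body \<subseteq> dual_ball"
    using dual_functional_in_dual_ball by blast
  show "dual_ball \<subseteq> dual_functional ` dual_body"
  proof
    fix f :: "'a \<Rightarrow> real"
    assume f: "f \<in> dual_ball"
    define w where "w = (\<Sum>b\<in>Basis. f (from_coord b) *\<^sub>R b)"
    have lin: "linear (\<lambda>v. f (from_coord v))"
      using linear_compose[OF linear_from_coord dual_ball_linear[OF f]] by (simp add: o_def)
    have "f x = dual_functional w x" for x
    proof -
      have "f x = f (from_coord (\<Sum>b\<in>Basis. (coord x \<bullet> b) *\<^sub>R b))"
        by (simp add: euclidean_representation)
      also have "\<dots> = (\<Sum>b\<in>Basis. (coord x \<bullet> b) * f (from_coord b))"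
        by (simp add: linear_sum[OF lin] linear_scale[OF lin])
      also have "\<dots> = dual_functional w x"
        by (simp add: w_def dual_functional_def inner_sum_left inner_sum_right inner_commute mult.commute)
      finally show ?thesis .
    qed
    then have f_eq: "f = dual_functional w"
      by blast
    then have "w \<in> dual_body"
      using dual_ball_le_norm[OF f] by (auto simp: dual_body_def dual_functional_def)
    with f_eq show "f \<in> dual_functional ` dual_body"
      by blast
  qed
qed

(* Oriented to match the convex combinations in dual_ext_def. *)
lemma dual_functional_convex_combination:
  "(\<lambda>x. t * dual_functional b x + (1 - t) * dual_functional a x)
     = dual_functional ((1 - t) *\<^sub>R a + t *\<^sub>R b)"
  by (auto simp: dual_functional_def inner_add_left)

lemma dual_functional_in_dual_ext_iff: "dual_functional w \<in> dual_ext \<longleftrightarrow> w \<in> dual_vertices"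
proof -
  have "dual_functional w \<in> dual_ext \<longleftrightarrow> w \<in> dual_body \<and>
      (\<forall>b\<in>dual_body. \<forall>a\<in>dual_body. \<forall>t. 0 < t \<and> t < 1 \<and> w = (1 - t) *\<^sub>R a + t *\<^sub>R b \<longrightarrow> b = a)"
    unfolding dual_ext_def dual_ball_eq_image ball_simps(9) mem_Collect_eq dual_functional_convex_combination
      inj_image_mem_iff[OF inj_dual_functional] inj_eq[OF inj_dual_functional]
    by (rule refl)
  also have "\<dots> \<longleftrightarrow> w \<in> dual_vertices"
    unfolding dual_vertices_def extreme_point_of_def in_segment by fastforce
  finally show ?thesis .
qed

lemma dual_ext_eq_image: "dual_ext = dual_functional ` dual_vertices"
proof
  show "dual_functional ` dual_vertices \<subseteq> dual_ext"
    using dual_functional_in_dual_ext_iff by blast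
  show "dual_ext \<subseteq> dual_functional ` dual_vertices"
  proof
    fix f :: "'a \<Rightarrow> real"
    assume "f \<in> dual_ext"
    moreover obtain w where "f = dual_functional w"
      using \<open>f \<in> dual_ext\<close> dual_ext_subset_dual_ball dual_ball_eq_image by blast
    ultimately show "f \<in> dual_functional ` dual_vertices"
      using dual_functional_in_dual_ext_iff by blast
  qed
qed

lemma dual_vertices_subset_dual_body: "dual_vertices \<subseteq> dual_body"
  by (auto simp: dual_vertices_def extreme_point_of_def)

lemma dual_vertex_le_norm: "v \<in> dual_vertices \<Longrightarrow> v \<bullet> coord x \<le> norm x"
  using dual_vertices_subset_dual_body by (auto simp: dual_body_def)

lemma dual_functional_in_supp_funcs:
  assumes "w \<in> dual_body" and "x \<noteq> 0" and "w \<bullet> coord x = norm x"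
  shows "dual_functional w \<in> J x"
  using supp_funcsI[OF dual_functional_in_dual_ball[OF assms(1)] assms(2)] assms(3)
  by (simp add: dual_functional_def)

definition unit_body :: "'n set" where
  "unit_body = coord ` cball 0 1"

lemma unit_body_eq: "unit_body = {v. norm (from_coord v) \<le> 1}"
  unfolding unit_body_def by (auto simp: image_iff) (metis coord_from_coord mem_cball_0)

lemma compact_unit_body: "compact unit_body"
proof -
  have "closed unit_body"
    unfolding unit_body_eq
    by (intro closed_Collect_le continuous_intros linear_continuous_on bounded_linear_from_coord)
  moreover have "bounded unit_body"
    unfolding unit_body_def by (intro bounded_linear_image bounded_linear_coord bounded_cball)
  ultimately show ?thesis
    by (simp add: compact_eq_bounded_closed)
qed

lemma convex_unit_body: "convex unit_body"
  unfolding unit_body_def by (intro convex_linear_image linear_coord convex_cball)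

lemma dual_body_iff_unit_body: "w \<in> dual_body \<longleftrightarrow> (\<forall>v\<in>unit_body. w \<bullet> v \<le> 1)"
proof
  assume w: "w \<in> dual_body"
  show "\<forall>v\<in>unit_body. w \<bullet> v \<le> 1"
  proof
    fix v
    assume "v \<in> unit_body"
    then obtain x where "norm x \<le> 1" and "v = coord x"
      by (auto simp: unit_body_def)
    moreover have "w \<bullet> coord x \<le> norm x"
      using w unfolding dual_body_def by blast
    ultimately show "w \<bullet> v \<le> 1"
      by simp
  qed
next
  assume unit: "\<forall>v\<in>unit_body. w \<bullet> v \<le> 1"
  show "w \<in> dual_body"
    unfolding dual_body_def
  proof (intro CollectI allI)
    fix x :: 'a
    show "w \<bullet> coord x \<le> norm x"
    proof (cases "x = 0")
      case False
      then have "coord (x /\<^sub>R norm x) \<in> unit_body"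
        by (simp add: unit_body_def)
      then have "(w \<bullet> coord x) / norm x \<le> 1"
        using unit by (auto simp: linear_scale[OF linear_coord] divide_inverse_commute)
      then show ?thesis
        using False by (simp add: divide_le_eq_1)
    qed (simp add: linear_0[OF linear_coord])
  qed
qed

lemma dual_body_eq_Inter: "dual_body = (\<Inter>v\<in>{v. v extreme_point_of unit_body}. {w. v \<bullet> w \<le> 1})"
proof -
  have hull: "unit_body = convex hull {v. v extreme_point_of unit_body}"
    by (rule Krein_Milman_Minkowski[OF compact_unit_body convex_unit_body])
  have "unit_body \<subseteq> {v. w \<bullet> v \<le> 1} \<longleftrightarrow> {v. v extreme_point_of unit_body} \<subseteq> {v. w \<bullet> v \<le> 1}" for w
  proof
    show "unit_body \<subseteq> {v. w \<bullet> v \<le> 1} \<Longrightarrow> {v. v extreme_point_of unit_body} \<subseteq> {v. w \<bullet> v \<le> 1}"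
      by (auto simp: extreme_point_of_def)
    show "{v. v extreme_point_of unit_body} \<subseteq> {v. w \<bullet> v \<le> 1} \<Longrightarrow> unit_body \<subseteq> {v. w \<bullet> v \<le> 1}"
      by (subst hull) (intro hull_minimal convex_halfspace_le)
  qed
  then show ?thesis
    by (auto simp: dual_body_iff_unit_body inner_commute subset_eq)
qed

lemma bounded_dual_body: "bounded dual_body"
proof -
  obtain C where "C > 0" and C: "\<And>v. norm (from_coord v) \<le> norm v * C"
    using bounded_linear.pos_bounded[OF bounded_linear_from_coord] by blast
  have "norm w \<le> C" if "w \<in> dual_body" for w
  proof -
    have "norm w * norm w = w \<bullet> coord (from_coord w)"
      by (simp add: power2_norm_eq_inner[symmetric] power2_eq_square)
    also have "\<dots> \<le> norm (from_coord w)"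
      using that unfolding dual_body_def by blast
    also have "\<dots> \<le> norm w * C"
      by (rule C)
    finally show ?thesis
      using \<open>C > 0\<close> by (cases "w = 0") (auto simp: mult_le_cancel_left_pos)
  qed
  then show ?thesis
    unfolding bounded_iff by blast
qed

lemma norming_dual_body_exists: "\<exists>w\<in>dual_body. w \<bullet> coord x = norm x"
proof (cases "x = 0")
  case True
  then show ?thesis
    by (intro bexI[of _ 0]) (auto simp: dual_body_def)
next
  case False
  \<comment> \<open>Hahn-Banach: support the open convex set \<open>S\<close> at the boundary point \<open>u\<close>.\<close>
  define S where "S = from_coord -` ball 0 1"
  have "open S"
    unfolding S_def
    using bounded_linear_from_coord by (intro continuous_open_vimage open_ball) (rule linear_continuous_at)
  have "convex S"
    unfolding S_def by (intro convex_linear_vimage linear_from_coord convex_ball)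
  have "0 \<in> S"
    by (simp add: S_def linear_0[OF linear_from_coord])
  have unit_body_closure: "unit_body \<subseteq> closure S"
  proof
    fix v
    assume v: "v \<in> unit_body"
    show "v \<in> closure S"
    proof (cases "v = 0")
      case True
      then show ?thesis
        using \<open>0 \<in> S\<close> closure_subset by blast
    next
      case False
      have "open_segment 0 v \<subseteq> S"
      proof
        fix y
        assume "y \<in> open_segment 0 v"
        then obtain t where t: "0 < t" "t < 1" and y: "y = t *\<^sub>R v"
          by (auto simp: in_segment)
        have "norm (from_coord y) = t * norm (from_coord v)"
          using t by (simp add: y linear_scale[OF linear_from_coord])
        also have "\<dots> \<le> t"
          using t v unfolding unit_body_eq by (simp add: mult_left_le)
        also have "\<dots> < 1"
          by (rule t(2))
        finally show "y \<in> S"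
          by (simp add: S_def)
      qed
      then have "closed_segment 0 v \<subseteq> closure S"
        using closure_mono[of "open_segment 0 v" S] False by simp
      then show ?thesis
        by auto
    qed
  qed
  define u where "u = coord (x /\<^sub>R norm x)"
  have "u \<in> unit_body" and "u \<notin> S"
    using False by (simp_all add: u_def unit_body_def S_def)
  then have u_closure: "u \<in> closure S" and u_interior: "u \<notin> rel_interior S"
    using unit_body_closure rel_interior_open[OF \<open>open S\<close>] by auto
  obtain a where "a \<noteq> 0"
    and a: "\<And>y. y \<in> closure S \<Longrightarrow> a \<bullet> u \<le> a \<bullet> y"
    and a': "\<And>y. y \<in> rel_interior S \<Longrightarrow> a \<bullet> u < a \<bullet> y"
    using supporting_hyperplane_relative_frontier[OF \<open>convex S\<close> u_closure u_interior] by blast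
  have "a \<bullet> u < 0"
    using a'[of 0] \<open>0 \<in> S\<close> rel_interior_open[OF \<open>open S\<close>] by simp
  define w where "w = (1 / (a \<bullet> u)) *\<^sub>R a"
  have "w \<in> dual_body"
    unfolding dual_body_iff_unit_body
  proof
    fix v
    assume "v \<in> unit_body"
    then have "a \<bullet> u \<le> a \<bullet> v"
      using a unit_body_closure by blast
    then show "w \<bullet> v \<le> 1"
      using \<open>a \<bullet> u < 0\<close> by (simp add: w_def field_simps)
  qed
  moreover have "w \<bullet> coord x = norm x"
  proof -
    have "coord x = norm x *\<^sub>R u"
      using False by (simp add: u_def linear_scale[OF linear_coord])
    then show ?thesis
      using \<open>a \<bullet> u < 0\<close> by (simp add: w_def)
  qed
  ultimately show ?thesis
    by blast
qed

end

section \<open>Polyhedral spaces\<close>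

locale polyhedral_coordinates = linear_coordinates coord
  for coord :: "'a::real_normed_vector \<Rightarrow> 'n::euclidean_space" +
  assumes polyhedral: "polyhedral TYPE('a)"
begin

lemma finite_extreme_points_unit_body: "finite {v. v extreme_point_of unit_body}"
proof -
  have "v \<in> coord ` {x. x extreme_point_of cball 0 1}" if v: "v extreme_point_of unit_body" for v
  proof -
    have "from_coord v extreme_point_of cball 0 1"
      unfolding extreme_point_of_def
    proof (intro conjI ballI)
      show "from_coord v \<in> cball 0 1"
        using v unit_body_eq by (auto simp: extreme_point_of_def)
      fix a b
      assume "a \<in> cball (0::'a) 1" and "b \<in> cball (0::'a) 1"
      then have "coord a \<in> unit_body" and "coord b \<in> unit_body"
        by (auto simp: unit_body_def)
      then have "v \<notin> open_segment (coord a) (coord b)"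
        using v by (auto simp: extreme_point_of_def)
      then show "from_coord v \<notin> open_segment a b"
        using open_segment_linear_image[OF linear_coord bij_is_inj[OF bij_coord], of a b]
        by (metis coord_from_coord image_eqI)
    qed
    then show ?thesis
      by (intro image_eqI[of _ _ "from_coord v"]) auto
  qed
  then have "{v. v extreme_point_of unit_body} \<subseteq> coord ` {x. x extreme_point_of cball 0 1}"
    by blast
  then show ?thesis
    using polyhedral unfolding polyhedral_def by (meson finite_imageI finite_subset)
qed

lemma polyhedron_dual_body: "polyhedron dual_body"
  unfolding dual_body_eq_Inter using finite_extreme_points_unit_body
  by (intro polyhedron_Inter) (auto intro: polyhedron_halfspace_le)

lemma convex_dual_body: "convex dual_body"
  by (rule polyhedron_imp_convex[OF polyhedron_dual_body])

lemma finite_dual_vertices: "finite dual_vertices"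
  unfolding dual_vertices_def by (rule finite_polyhedron_extreme_points[OF polyhedron_dual_body])

lemma dual_body_eq_convex_hull: "dual_body = convex hull dual_vertices"
  unfolding dual_vertices_def
  using bounded_dual_body polyhedron_imp_closed[OF polyhedron_dual_body] convex_dual_body
  by (intro Krein_Milman_Minkowski) (auto simp: compact_eq_bounded_closed)

lemma norming_dual_vertex_exists: "\<exists>v\<in>dual_vertices. v \<bullet> coord x = norm x"
proof -
  obtain w where w: "w \<in> dual_body" "w \<bullet> coord x = norm x"
    using norming_dual_body_exists by blast
  then have "dual_vertices \<noteq> {}"
    using dual_body_eq_convex_hull by auto
  moreover have "continuous_on dual_vertices (\<lambda>v. v \<bullet> coord x)"
    by (intro continuous_intros)
  ultimately obtain v where v: "v \<in> dual_vertices" "\<forall>v'\<in>dual_vertices. v' \<bullet> coord x \<le> v \<bullet> coord x"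
    using continuous_attains_sup[OF finite_imp_compact[OF finite_dual_vertices]] by blast
  then have "dual_vertices \<subseteq> {v'. coord x \<bullet> v' \<le> v \<bullet> coord x}"
    by (auto simp: inner_commute)
  then have "convex hull dual_vertices \<subseteq> {v'. coord x \<bullet> v' \<le> v \<bullet> coord x}"
    by (intro hull_minimal convex_halfspace_le)
  then have "norm x \<le> v \<bullet> coord x"
    using w dual_body_eq_convex_hull by (auto simp: inner_commute)
  then show ?thesis
    using v(1) dual_vertex_le_norm[OF v(1), of x] by force
qed

lemma supp_funcs_eq_if_norming_vertices_agree:
  assumes h: "h \<in> J x"
    and agree: "\<And>v. v \<in> dual_vertices \<Longrightarrow> v \<bullet> coord x = norm x \<Longrightarrow> dual_functional v = g"
  shows "h = g"
proof -
  obtain w where "w \<in> dual_body" and h_w: "h = dual_functional w"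
    using supp_funcsD(1)[OF h] dual_ball_eq_image by blast
  then obtain c where c: "\<forall>v\<in>dual_vertices. 0 \<le> c v" "sum c dual_vertices = 1"
    "(\<Sum>v\<in>dual_vertices. c v *\<^sub>R v) = w"
    using convex_hull_finite[OF finite_dual_vertices] dual_body_eq_convex_hull by auto
  have h_sum: "h y = (\<Sum>v\<in>dual_vertices. c v * (v \<bullet> coord y))" for y
    using h_w c(3)[symmetric] by (simp add: dual_functional_def inner_sum_left)
  have "(\<Sum>v\<in>dual_vertices. c v * (norm x - v \<bullet> coord x)) = sum c dual_vertices * norm x - h x"
    by (simp add: h_sum right_diff_distrib sum_subtractf sum_distrib_right)
  also have "\<dots> = 0"
    using c(2) supp_funcsD(2)[OF h] by simp
  finally have norming: "\<forall>v\<in>dual_vertices. c v * (norm x - v \<bullet> coord x) = 0"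
    using c(1) dual_vertex_le_norm by (subst (asm) sum_nonneg_eq_0_iff[OF finite_dual_vertices]) auto
  then have agree_terms: "c v * (v \<bullet> coord y) = c v * g y" if "v \<in> dual_vertices" for v y
  proof (cases "c v = 0")
    case False
    then have "dual_functional v = g"
      using that agree norming by fastforce
    then show ?thesis
      by (metis dual_functional_def)
  qed simp
  have "h y = g y" for y
  proof -
    have "h y = (\<Sum>v\<in>dual_vertices. c v * g y)"
      unfolding h_sum using agree_terms by (intro sum.cong) auto
    also have "\<dots> = g y"
      using c(2) by (simp add: sum_distrib_right[symmetric])
    finally show ?thesis .
  qed
  then show "h = g" ..
qed

lemma Sm_dual_functional_iff:
  assumes v0: "v0 \<in> dual_vertices"
  shows "x \<in> Sm (dual_functional v0) \<longleftrightarrow>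
    x \<noteq> 0 \<and> (\<forall>v\<in>dual_vertices - {v0}. v \<bullet> coord x < v0 \<bullet> coord x)"
proof
  assume x: "x \<in> Sm (dual_functional v0)"
  show "x \<noteq> 0 \<and> (\<forall>v\<in>dual_vertices - {v0}. v \<bullet> coord x < v0 \<bullet> coord x)"
  proof (intro conjI ballI)
    show "x \<noteq> 0"
      by (rule SmD(1)[OF x])
    fix v
    assume v: "v \<in> dual_vertices - {v0}"
    have "v \<bullet> coord x \<noteq> norm x"
    proof
      assume "v \<bullet> coord x = norm x"
      then have "dual_functional v \<in> J x"
        using v dual_vertices_subset_dual_body SmD(1)[OF x]
        by (intro dual_functional_in_supp_funcs) auto
      then have "dual_functional v = dual_functional v0"
        using SmD(2)[OF x] by blast
      then show False
        using v by (simp add: inj_eq[OF inj_dual_functional])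
    qed
    moreover have "v0 \<bullet> coord x = norm x"
      using SmD(4)[OF x] by (simp add: dual_functional_def)
    moreover have "v \<bullet> coord x \<le> norm x"
      using v dual_vertex_le_norm by blast
    ultimately show "v \<bullet> coord x < v0 \<bullet> coord x"
      by linarith
  qed
next
  assume x: "x \<noteq> 0 \<and> (\<forall>v\<in>dual_vertices - {v0}. v \<bullet> coord x < v0 \<bullet> coord x)"
  have only_v0: "v = v0" if "v \<in> dual_vertices" and "v \<bullet> coord x = norm x" for v
  proof (rule ccontr)
    assume "v \<noteq> v0"
    then have "v \<bullet> coord x < v0 \<bullet> coord x"
      using that(1) x by blast
    then show False
      using that(2) dual_vertex_le_norm[OF v0, of x] by linarith
  qed
  obtain v where "v \<in> dual_vertices" and "v \<bullet> coord x = norm x"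
    using norming_dual_vertex_exists by blast
  with only_v0 have "v0 \<bullet> coord x = norm x"
    by simp
  then have "dual_functional v0 \<in> J x"
    using v0 x dual_vertices_subset_dual_body by (intro dual_functional_in_supp_funcs) auto
  moreover have "h = dual_functional v0" if "h \<in> J x" for h
    using only_v0 by (intro supp_funcs_eq_if_norming_vertices_agree[OF that]) blast
  ultimately have "J x = {dual_functional v0}"
    by blast
  then show "x \<in> Sm (dual_functional v0)"
    using x by (simp add: Sm_def)
qed

lemma open_Sm:
  fixes f :: "'a \<Rightarrow> real"
  assumes "f \<in> dual_ext"
  shows "open (Sm f)"
proof -
  obtain v0 where v0: "v0 \<in> dual_vertices" and f: "f = dual_functional v0"
    using assms dual_ext_eq_image by blast
  have cont: "continuous_on UNIV (\<lambda>x. v \<bullet> coord x)" for v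
    by (intro continuous_on_inner continuous_on_const linear_continuous_on bounded_linear_coord)
  have "open {x::'a. x \<noteq> 0}"
    by (rule open_Collect_neq) (auto intro: continuous_intros)
  moreover have "open (\<Inter>v\<in>dual_vertices - {v0}. {x. v \<bullet> coord x < v0 \<bullet> coord x})"
    using finite_dual_vertices by (intro open_INT ballI open_Collect_less cont) auto
  moreover have "Sm f = {x. x \<noteq> 0} \<inter> (\<Inter>v\<in>dual_vertices - {v0}. {x. v \<bullet> coord x < v0 \<bullet> coord x})"
    unfolding f using Sm_dual_functional_iff[OF v0] by auto
  ultimately show ?thesis
    by (simp add: open_Int)
qed

lemma separating_direction:
  assumes v0: "v0 \<in> dual_vertices"
  obtains z where "\<And>v. v \<in> dual_vertices - {v0} \<Longrightarrow> v \<bullet> coord z < v0 \<bullet> coord z"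
proof -
  define H where "H = convex hull (dual_vertices - {v0})"
  have "closed H"
    unfolding H_def using finite_dual_vertices
    by (intro compact_imp_closed finite_imp_compact_convex_hull) simp
  have "convex H"
    by (simp add: H_def)
  have "convex (dual_body - {v0})"
    using v0 extreme_point_of_stillconvex[OF convex_dual_body] by (simp add: dual_vertices_def)
  moreover have "dual_vertices - {v0} \<subseteq> dual_body - {v0}"
    using dual_vertices_subset_dual_body by blast
  ultimately have "H \<subseteq> dual_body - {v0}"
    unfolding H_def by (rule hull_minimal[rotated])
  then have "v0 \<notin> H"
    by blast
  then obtain a b where ab: "a \<bullet> v0 < b" "\<forall>v\<in>H. b < a \<bullet> v"
    using separating_hyperplane_closed_point[OF \<open>convex H\<close> \<open>closed H\<close>] by blast
  show ?thesis
  proof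
    fix v
    assume "v \<in> dual_vertices - {v0}"
    then have "v \<in> H"
      unfolding H_def by (rule hull_inc)
    then have "b < a \<bullet> v"
      using ab(2) by blast
    then show "v \<bullet> coord (from_coord (- a)) < v0 \<bullet> coord (from_coord (- a))"
      using ab(1) by (simp add: inner_commute)
  qed
qed

lemma dual_vertices_not_singleton: "dual_vertices - {v0} \<noteq> {}"
proof -
  obtain b :: 'n where "b \<in> Basis"
    using nonempty_Basis by blast
  then have "from_coord b \<noteq> 0"
    by (metis coord_from_coord linear_0[OF linear_coord] nonzero_Basis)
  obtain v1 where v1: "v1 \<in> dual_vertices" "v1 \<bullet> coord (from_coord b) = norm (from_coord b)"
    using norming_dual_vertex_exists by blast
  obtain v2 where v2: "v2 \<in> dual_vertices" "v2 \<bullet> coord (- from_coord b) = norm (- from_coord b)"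
    using norming_dual_vertex_exists by blast
  have "v1 \<noteq> v2"
    using v1(2) v2(2) \<open>from_coord b \<noteq> 0\<close> by (auto simp: linear_neg[OF linear_coord])
  then show ?thesis
    using v1(1) v2(1) by blast
qed

lemma closure_Sm:
  fixes g :: "'a \<Rightarrow> real"
  assumes "g \<in> dual_ext" and "g x = norm x"
  shows "x \<in> closure (Sm g)"
proof -
  obtain v0 where v0: "v0 \<in> dual_vertices" and g: "g = dual_functional v0"
    using assms(1) dual_ext_eq_image by blast
  obtain z where z: "\<And>v. v \<in> dual_vertices - {v0} \<Longrightarrow> v \<bullet> coord z < v0 \<bullet> coord z"
    using separating_direction[OF v0] by blast
  \<comment> \<open>Moving \<open>x\<close> towards \<open>z\<close> makes \<open>v0\<close> the unique norming vertex.\<close>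
  define s where "s n = x + inverse (real (Suc n)) *\<^sub>R z" for n
  have "s n \<in> Sm g" for n
  proof -
    define t where "t = inverse (real (Suc n))"
    have coord_s: "v \<bullet> coord (s n) = v \<bullet> coord x + t * (v \<bullet> coord z)" for v
      by (simp add: s_def t_def linear_add[OF linear_coord] linear_scale[OF linear_coord] inner_add_right)
    have less: "v \<bullet> coord (s n) < v0 \<bullet> coord (s n)" if "v \<in> dual_vertices - {v0}" for v
    proof -
      have "v \<bullet> coord x \<le> v0 \<bullet> coord x"
        using that dual_vertex_le_norm[of v x] assms(2) by (simp add: g dual_functional_def)
      moreover have "t * (v \<bullet> coord z) < t * (v0 \<bullet> coord z)"
        using z[OF that] by (simp add: t_def)
      ultimately show ?thesis
        unfolding coord_s by linarith
    qed
    moreover have "s n \<noteq> 0"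
    proof
      assume "s n = 0"
      obtain v where "v \<in> dual_vertices - {v0}"
        using dual_vertices_not_singleton by blast
      from less[OF this] show False
        by (simp add: \<open>s n = 0\<close> linear_0[OF linear_coord])
    qed
    ultimately show ?thesis
      unfolding g Sm_dual_functional_iff[OF v0] by blast
  qed
  moreover have "s \<longlonglongrightarrow> x"
    unfolding s_def
    using tendsto_add[OF tendsto_const tendsto_scaleR[OF LIMSEQ_inverse_real_of_nat tendsto_const]]
    by simp
  ultimately show ?thesis
    unfolding closure_sequential by blast
qed

lemma Sm_nonempty:
  fixes f :: "'a \<Rightarrow> real"
  assumes "f \<in> dual_ext"
  shows "Sm f \<noteq> {}"
proof -
  have "f 0 = norm (0::'a)"
    using assms dual_ext_subset_dual_ball linear_0[OF dual_ball_linear] by auto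
  then have "0 \<in> closure (Sm f)"
    by (rule closure_Sm[OF assms])
  then show ?thesis
    by auto
qed

lemma norming_dual_ext_exists:
  fixes x :: 'a
  assumes "x \<noteq> 0"
  obtains g where "g \<in> dual_ext" and "g \<in> J x"
proof -
  obtain v where "v \<in> dual_vertices" and "v \<bullet> coord x = norm x"
    using norming_dual_vertex_exists by blast
  show ?thesis
  proof (rule that)
    show "dual_functional v \<in> dual_ext"
      using \<open>v \<in> dual_vertices\<close> dual_ext_eq_image by blast
    show "dual_functional v \<in> J x"
      using \<open>v \<in> dual_vertices\<close> \<open>v \<bullet> coord x = norm x\<close> assms dual_vertices_subset_dual_body
      by (intro dual_functional_in_supp_funcs) auto
  qed
qed

lemma Sm_or_two_norming_dual_ext:
  fixes x :: 'a
  assumes "x \<noteq> 0"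
  shows "(\<exists>g\<in>dual_ext. x \<in> Sm g)
    \<or> (\<exists>g1\<in>dual_ext. \<exists>g2\<in>dual_ext. g1 \<noteq> g2 \<and> g1 x = norm x \<and> g2 x = norm x)"
proof (rule disjCI)
  assume unique: "\<not> (\<exists>g1\<in>dual_ext. \<exists>g2\<in>dual_ext. g1 \<noteq> g2 \<and> g1 x = norm x \<and> g2 x = norm x)"
  obtain v where v: "v \<in> dual_vertices" "v \<bullet> coord x = norm x"
    using norming_dual_vertex_exists by blast
  have ext: "dual_functional w \<in> dual_ext" if "w \<in> dual_vertices" for w
    using that dual_ext_eq_image by blast
  have "dual_functional v \<in> J x"
    using v assms dual_vertices_subset_dual_body by (intro dual_functional_in_supp_funcs) auto
  moreover have "h = dual_functional v" if "h \<in> J x" for h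
  proof (rule supp_funcs_eq_if_norming_vertices_agree[OF that])
    fix w
    assume "w \<in> dual_vertices" and "w \<bullet> coord x = norm x"
    then have "dual_functional w \<in> dual_ext" and "dual_functional w x = norm x"
      and "dual_functional v \<in> dual_ext" and "dual_functional v x = norm x"
      using ext v by (simp_all add: dual_functional_def)
    then show "dual_functional w = dual_functional v"
      using unique by blast
  qed
  ultimately have "J x = {dual_functional v}"
    by blast
  then show "\<exists>g\<in>dual_ext. x \<in> Sm g"
    using assms ext[OF v(1)] by (auto simp: Sm_def)
qed

lemma Sm_eq_if_TEA_pair:
  fixes x y :: 'a
  assumes "TEA_pair x y" and "x \<in> Sm g1" and "y \<in> Sm g2"
  shows "g1 = g2"
proof -
  have "x + y \<noteq> 0"
    using TEA_pair_sum_eq_0[OF assms(1)] SmD(1)[OF assms(2)] by blast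
  then obtain h where "h \<in> J (x + y)"
    using norming_dual_ext_exists by blast
  then have "h \<in> J x" and "h \<in> J y"
    using supp_funcs_TEA_pair_sum[OF assms(1)] by auto
  then have "h = g1" and "h = g2"
    using SmD(2)[OF assms(2)] SmD(2)[OF assms(3)] by simp_all
  then show ?thesis
    by simp
qed

lemma TEA_pair_closure_Sm:
  fixes x y :: 'a
  assumes "TEA_pair x y" and "x + y \<noteq> 0"
  obtains f where "f \<in> dual_ext" and "x \<in> closure (Sm f)" and "y \<in> closure (Sm f)"
proof -
  obtain f where f: "f \<in> dual_ext" "f \<in> J (x + y)"
    using norming_dual_ext_exists[OF assms(2)] by blast
  then have "f x = norm x" and "f y = norm y"
    using supp_funcsD(2) supp_funcs_TEA_pair_sum[OF assms(1)] by metis+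
  then show ?thesis
    using that[OF f(1)] closure_Sm[OF f(1)] by simp
qed

end

section \<open>Linear bijections between polyhedral spaces\<close>

definition preserves_parallel_pairs :: "('a::real_normed_vector \<Rightarrow> 'b::real_normed_vector) \<Rightarrow> bool" where
  "preserves_parallel_pairs T \<longleftrightarrow> (\<forall>x y. parallel_pair x y \<longrightarrow> parallel_pair (T x) (T y))"

definition preserves_TEA_pairs :: "('a::real_normed_vector \<Rightarrow> 'b::real_normed_vector) \<Rightarrow> bool" where
  "preserves_TEA_pairs T \<longleftrightarrow> (\<forall>x y. TEA_pair x y \<longrightarrow> TEA_pair (T x) (T y))"

definition preserves_Sm_classes :: "('a::real_normed_vector \<Rightarrow> 'b::real_normed_vector) \<Rightarrow> bool" where
  "preserves_Sm_classes T \<longleftrightarrow> (\<forall>f\<in>dual_ext. \<exists>!g. g \<in> dual_ext \<and> T ` Sm f \<subseteq> Sm g)"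

lemma preserves_parallel_pairs_if_TEA:
  assumes "linear T" and "preserves_TEA_pairs T"
  shows "preserves_parallel_pairs T"
  using assms
  by (auto simp: preserves_parallel_pairs_def preserves_TEA_pairs_def parallel_pair_iff_TEA_pair
      linear_scale[OF assms(1), symmetric])

locale polyhedral_isomorphism =
  X: polyhedral_coordinates coordX + Y: polyhedral_coordinates coordY
  for coordX :: "'a::real_normed_vector \<Rightarrow> 'n::euclidean_space"
    and coordY :: "'b::real_normed_vector \<Rightarrow> 'm::euclidean_space" +
  fixes T :: "'a \<Rightarrow> 'b"
  assumes linear_T: "linear T" and bij_T: "bij T"
begin

lemma T_eq_0_iff [simp]: "T x = 0 \<longleftrightarrow> x = 0"
  using bij_is_inj[OF bij_T] linear_injective_0[OF linear_T] linear_0[OF linear_T] by blast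

lemma bounded_linear_T: "bounded_linear T"
  by (rule X.bounded_linear_of_linear[OF linear_T])

lemma open_image_T:
  assumes "open U"
  shows "open (T ` U)"
proof -
  have "bounded_linear (inv T)"
    by (rule Y.bounded_linear_of_linear[OF linear_inv_bij[OF linear_T bij_T]])
  moreover have "T ` U = inv T -` U"
    using bij_vimage_eq_inv_image[OF bij_imp_bij_inv[OF bij_T]] inv_inv_eq[OF bij_T] by simp
  ultimately show ?thesis
    using assms by (auto intro: continuous_open_vimage linear_continuous_at)
qed

lemma image_Sm_meets_Sm:
  assumes "f \<in> dual_ext" and "x \<in> Sm f" and "g \<in> dual_ext" and "g (T x) = norm (T x)"
  obtains x' where "x' \<in> Sm f" and "T x' \<in> Sm g"
proof -
  have "T x \<in> closure (Sm g)"
    by (rule Y.closure_Sm[OF assms(3,4)])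
  moreover have "open (T ` Sm f)"
    by (rule open_image_T[OF X.open_Sm[OF assms(1)]])
  moreover have "T x \<in> T ` Sm f"
    using assms(2) by blast
  ultimately have "T ` Sm f \<inter> Sm g \<noteq> {}"
    using open_Int_closure_eq_empty by blast
  then show ?thesis
    using that by blast
qed

lemma preserves_TEA_pairs_if_norming_on_Sm:
  assumes norming: "\<And>f. f \<in> dual_ext \<Longrightarrow> \<exists>g\<in>dual_ball. \<forall>z\<in>Sm f. g (T z) = norm (T z)"
  shows "preserves_TEA_pairs T"
  unfolding preserves_TEA_pairs_def
proof (intro allI impI)
  fix x y :: 'a
  assume xy: "TEA_pair x y"
  show "TEA_pair (T x) (T y)"
  proof (cases "x + y = 0")
    case True
    then show ?thesis
      using TEA_pair_sum_eq_0[OF xy] by (simp add: TEA_pair_def linear_0[OF linear_T])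
  next
    case False
    obtain f where f: "f \<in> dual_ext" "x \<in> closure (Sm f)" "y \<in> closure (Sm f)"
      using X.TEA_pair_closure_Sm[OF xy False] by blast
    obtain g where g: "g \<in> dual_ball" "\<forall>z\<in>Sm f. g (T z) = norm (T z)"
      using norming[OF f(1)] by blast
    have "closed {z. g (T z) = norm (T z)}"
      using g(1) bounded_linear_T unfolding dual_ball_def
      by (intro closed_Collect_eq continuous_intros linear_continuous_on bounded_linear_compose[of g T]) auto
    then have "closure (Sm f) \<subseteq> {z. g (T z) = norm (T z)}"
      using g(2) by (intro closure_minimal) auto
    then show ?thesis
      using f(2,3) TEA_pairI_norming[OF g(1)] by blast
  qed
qed

lemma abs_norming_on_Sm_if_preserves_parallel:
  assumes "preserves_parallel_pairs T" and "x0 \<in> Sm f" and "T x0 \<in> Sm g" and "z \<in> Sm f"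
  shows "\<bar>g (T z)\<bar> = norm (T z)"
proof -
  have "parallel_pair x0 z"
    using TEA_pair_Sm[OF assms(2,4)] parallel_pair_iff_TEA_pair[of x0 z] by (metis abs_one scaleR_one)
  then obtain c where c: "\<bar>c\<bar> = 1" "TEA_pair (T x0) (c *\<^sub>R T z)"
    using assms(1) parallel_pair_iff_TEA_pair by (metis preserves_parallel_pairs_def)
  have "T x0 + c *\<^sub>R T z \<noteq> 0"
    using TEA_pair_sum_eq_0[OF c(2)] SmD(1)[OF assms(3)] by blast
  then obtain h where "h \<in> J (T x0 + c *\<^sub>R T z)"
    using Y.norming_dual_ext_exists by blast
  then have "h \<in> J (T x0)" and h: "h \<in> J (c *\<^sub>R T z)"
    using supp_funcs_TEA_pair_sum[OF c(2)] by auto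
  then have "h = g"
    using SmD(2)[OF assms(3)] by simp
  then have "c * g (T z) = norm (T z)"
    using supp_funcsD[OF h] c(1) by (simp add: linear_scale[OF dual_ball_linear])
  then show ?thesis
    using c(1) by (metis abs_mult abs_norm_cancel mult_1)
qed

lemma norming_on_Sm_if_preserves_parallel:
  assumes parallel: "preserves_parallel_pairs T" and f: "f \<in> dual_ext"
  shows "\<exists>g\<in>dual_ball. \<forall>z\<in>Sm f. g (T z) = norm (T z)"
proof -
  obtain x where x: "x \<in> Sm f"
    using X.Sm_nonempty[OF f] by blast
  obtain g where g: "g \<in> dual_ext" "g \<in> J (T x)"
    using Y.norming_dual_ext_exists[of "T x"] SmD(1)[OF x] by auto
  obtain x0 where x0: "x0 \<in> Sm f" "T x0 \<in> Sm g"
    using image_Sm_meets_Sm[OF f x g(1) supp_funcsD(2)[OF g(2)]] by blast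
  have "g (T z) = norm (T z)" if z: "z \<in> Sm f" for z
  proof (rule ccontr)
    assume "g (T z) \<noteq> norm (T z)"
    then have gz: "g (T z) = - norm (T z)"
      using abs_norming_on_Sm_if_preserves_parallel[OF parallel x0 z] by (auto simp: abs_if split: if_splits)
    \<comment> \<open>The convex combination balancing the two norms would be mapped into \<open>ker g\<close>.\<close>
    define \<alpha> \<beta> where "\<alpha> = norm (T x0)" and "\<beta> = norm (T z)"
    have "\<alpha> > 0" and "\<beta> > 0"
      using SmD(1)[OF x0(1)] SmD(1)[OF z] by (simp_all add: \<alpha>_def \<beta>_def)
    define t where "t = \<alpha> / (\<alpha> + \<beta>)"
    define z' where "z' = (1 - t) *\<^sub>R x0 + t *\<^sub>R z"
    have "0 \<le> t" and "t \<le> 1"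
      using \<open>\<alpha> > 0\<close> \<open>\<beta> > 0\<close> by (simp_all add: t_def)
    then have z': "z' \<in> Sm f"
      unfolding z'_def by (rule convexD_alt[OF convex_Sm x0(1) z])
    have "g (T z') = (1 - t) * \<alpha> - t * \<beta>"
      using SmD(4)[OF x0(2)] gz dual_ext_subset_dual_ball g(1)
      by (auto simp: z'_def \<alpha>_def \<beta>_def linear_add[OF linear_T] linear_scale[OF linear_T]
          linear_add[OF dual_ball_linear] linear_scale[OF dual_ball_linear])
    also have "\<dots> = 0"
      using \<open>\<alpha> > 0\<close> \<open>\<beta> > 0\<close> by (simp add: t_def field_simps)
    finally have "norm (T z') = 0"
      using abs_norming_on_Sm_if_preserves_parallel[OF parallel x0 z'] by simp
    then show False
      using SmD(1)[OF z'] by simp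
  qed
  moreover have "g \<in> dual_ball"
    using g(1) dual_ext_subset_dual_ball by blast
  ultimately show ?thesis
    by blast
qed

lemma preserves_Sm_classes_if_preserves_TEA:
  assumes TEA: "preserves_TEA_pairs T"
  shows "preserves_Sm_classes T"
  unfolding preserves_Sm_classes_def
proof
  fix f :: "'a \<Rightarrow> real"
  assume f: "f \<in> dual_ext"
  have same_class: "g1 = g2"
    if "x1 \<in> Sm f" "x2 \<in> Sm f" "T x1 \<in> Sm g1" "T x2 \<in> Sm g2" for x1 x2 g1 g2
    using TEA[unfolded preserves_TEA_pairs_def] TEA_pair_Sm[OF that(1,2)] Y.Sm_eq_if_TEA_pair that(3,4)
    by blast
  have smooth: "\<exists>g\<in>dual_ext. T x \<in> Sm g" if x: "x \<in> Sm f" for x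
  proof -
    have "T x \<noteq> 0"
      using SmD(1)[OF x] by simp
    from Y.Sm_or_two_norming_dual_ext[OF this] show ?thesis
  proof (elim disjE)
    assume "\<exists>g1\<in>dual_ext. \<exists>g2\<in>dual_ext. g1 \<noteq> g2 \<and> g1 (T x) = norm (T x) \<and> g2 (T x) = norm (T x)"
    then obtain g1 g2 where g: "g1 \<in> dual_ext" "g2 \<in> dual_ext" "g1 \<noteq> g2"
      "g1 (T x) = norm (T x)" "g2 (T x) = norm (T x)"
      by blast
    obtain x1 where "x1 \<in> Sm f" "T x1 \<in> Sm g1"
      using image_Sm_meets_Sm[OF f x g(1,4)] by blast
    moreover obtain x2 where "x2 \<in> Sm f" "T x2 \<in> Sm g2"
      using image_Sm_meets_Sm[OF f x g(2,5)] by blast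
    ultimately show ?thesis
      using same_class g(3) by blast
  qed auto
  qed
  obtain x0 where x0: "x0 \<in> Sm f"
    using X.Sm_nonempty[OF f] by blast
  then obtain g0 where g0: "g0 \<in> dual_ext" "T x0 \<in> Sm g0"
    using smooth by blast
  show "\<exists>!g. g \<in> dual_ext \<and> T ` Sm f \<subseteq> Sm g"
  proof
    show "g0 \<in> dual_ext \<and> T ` Sm f \<subseteq> Sm g0"
      using g0 smooth same_class x0 by blast
    show "g = g0" if "g \<in> dual_ext \<and> T ` Sm f \<subseteq> Sm g" for g
      using that x0 g0(2) same_class by blast
  qed
qed

lemma norming_on_Sm_if_preserves_Sm_classes:
  assumes "preserves_Sm_classes T" and "f \<in> dual_ext"
  shows "\<exists>g\<in>dual_ball. \<forall>z\<in>Sm f. g (T z) = norm (T z)"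
proof -
  obtain g where "g \<in> dual_ext" and "T ` Sm f \<subseteq> Sm g"
    using assms unfolding preserves_Sm_classes_def by blast
  then show ?thesis
    using dual_ext_subset_dual_ball SmD(4) by blast
qed

theorem preservation_equivalences:
  "(preserves_parallel_pairs T \<longleftrightarrow> preserves_TEA_pairs T)
    \<and> (preserves_TEA_pairs T \<longleftrightarrow> preserves_Sm_classes T)"
  using preserves_parallel_pairs_if_TEA[OF linear_T] preserves_TEA_pairs_if_norming_on_Sm
    norming_on_Sm_if_preserves_parallel preserves_Sm_classes_if_preserves_TEA
    norming_on_Sm_if_preserves_Sm_classes
  by blast

end

section \<open>Existence of coordinates\<close>

definition some_basis :: "'a::real_vector set" where
  "some_basis = (SOME B. independent B \<and> span B = UNIV)"

lemma some_basis: "independent (some_basis :: 'a::real_vector set)" "span (some_basis :: 'a set) = UNIV"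
proof -
  obtain B :: "'a set" where "independent B" and "UNIV \<subseteq> span B"
    by (meson maximal_independent_subset)
  then have "\<exists>B::'a set. independent B \<and> span B = UNIV"
    by blast
  from someI_ex[OF this] show "independent (some_basis :: 'a set)" "span (some_basis :: 'a set) = UNIV"
    unfolding some_basis_def by simp_all
qed

(* The fallback {0} only keeps the carrier nonempty and finite; for a nontrivial finite-dimensional
   space the carrier is the basis some_basis. *)
typedef (overloaded) ('a::real_vector) basis_index =
  "if finite (some_basis :: 'a set) \<and> some_basis \<noteq> ({} :: 'a set) then some_basis else {0 :: 'a}"
  by (cases "finite (some_basis :: 'a set) \<and> some_basis \<noteq> ({} :: 'a set)") auto

instance basis_index :: (real_vector) finite
proof
  show "finite (UNIV :: 'a basis_index set)"
    by (subst type_definition.Abs_image[OF type_definition_basis_index, symmetric])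
      (rule finite_imageI, simp)
qed

lemma range_Rep_basis_index:
  assumes "fin_dim_space TYPE('a::real_normed_vector)" and "\<exists>x::'a. x \<noteq> 0"
  shows "finite (some_basis :: 'a set)" and "range (Rep_basis_index :: 'a basis_index \<Rightarrow> 'a) = some_basis"
proof -
  obtain S :: "'a set" where "finite S" and "span S = UNIV"
    using assms(1) by (auto simp: fin_dim_space_def)
  then show "finite (some_basis :: 'a set)"
    using independent_span_bound[OF _ some_basis(1)[where 'a = 'a]] by auto
  moreover have "some_basis \<noteq> ({} :: 'a set)"
  proof
    assume "some_basis = ({} :: 'a set)"
    then have "(UNIV :: 'a set) = {0}"
      using some_basis(2)[where 'a = 'a] by simp
    then show False
      using assms(2) by auto
  qed
  ultimately show "range (Rep_basis_index :: 'a basis_index \<Rightarrow> 'a) = some_basis"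
    using type_definition.Rep_range[OF type_definition_basis_index[where 'a = 'a]] by simp
qed

definition from_basis_coords :: "real^('a::real_vector basis_index) \<Rightarrow> 'a" where
  "from_basis_coords v = (\<Sum>i\<in>UNIV. v $ i *\<^sub>R Rep_basis_index i)"

lemma linear_from_basis_coords: "linear from_basis_coords"
  by (rule linearI) (simp_all add: from_basis_coords_def scaleR_add_left sum.distrib scaleR_sum_right)

lemma bij_from_basis_coords:
  assumes "fin_dim_space TYPE('a::real_normed_vector)" and "\<exists>x::'a. x \<noteq> 0"
  shows "bij (from_basis_coords :: real^('a basis_index) \<Rightarrow> 'a)"
proof (rule bijI)
  note range = range_Rep_basis_index[OF assms]
  have "inj (Rep_basis_index :: 'a basis_index \<Rightarrow> 'a)"
    by (rule injI) (simp add: Rep_basis_index_inject)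
  then have sum_basis: "(\<Sum>i\<in>UNIV. g (Rep_basis_index i)) = (\<Sum>b\<in>some_basis. g b)" for g :: "'a \<Rightarrow> 'a"
    by (simp add: sum.reindex flip: range(2))
  show "inj (from_basis_coords :: real^('a basis_index) \<Rightarrow> 'a)"
    unfolding linear_injective_0[OF linear_from_basis_coords]
  proof (intro allI impI)
    fix v :: "real^('a basis_index)"
    assume "from_basis_coords v = 0"
    then have sum_0: "(\<Sum>b\<in>some_basis. v $ Abs_basis_index b *\<^sub>R b) = 0"
      using sum_basis[of "\<lambda>b. v $ Abs_basis_index b *\<^sub>R b"]
      by (simp add: from_basis_coords_def Rep_basis_index_inverse)
    have coeffs: "v $ Abs_basis_index b = 0" if "b \<in> some_basis" for b
    proof (rule ccontr)
      assume "v $ Abs_basis_index b \<noteq> 0"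
      then have "dependent (some_basis :: 'a set)"
        unfolding dependent_finite[OF range(1)] using that sum_0
        by (intro exI[of _ "\<lambda>b. v $ Abs_basis_index b"]) auto
      then show False
        using some_basis(1)[where 'a = 'a] by simp
    qed
    show "v = 0"
      unfolding vec_eq_iff
    proof
      fix i :: "'a basis_index"
      have "Rep_basis_index i \<in> some_basis"
        by (simp flip: range(2))
      from coeffs[OF this] show "v $ i = 0 $ i"
        by (simp add: Rep_basis_index_inverse)
    qed
  qed
  have "y \<in> range from_basis_coords" for y :: 'a
  proof -
    have "y \<in> span some_basis"
      using some_basis(2)[where 'a = 'a] by simp
    then obtain u where u: "(\<Sum>b\<in>some_basis. u b *\<^sub>R b) = y"
      unfolding span_finite[OF range(1)] by blast
    have "from_basis_coords (\<chi> i. u (Rep_basis_index i)) = y"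
      using sum_basis[of "\<lambda>b. u b *\<^sub>R b"] u by (simp add: from_basis_coords_def)
    then show ?thesis
      by (rule range_eqI[OF sym])
  qed
  then show "surj (from_basis_coords :: real^('a basis_index) \<Rightarrow> 'a)"
    by blast
qed

lemma polyhedral_coordinates_exist:
  assumes "fin_dim_space TYPE('a::real_normed_vector)" and "polyhedral TYPE('a)"
    and "\<exists>x::'a. x \<noteq> 0"
  shows "polyhedral_coordinates (inv (from_basis_coords :: real^('a basis_index) \<Rightarrow> 'a))"
proof -
  have "bij (from_basis_coords :: real^('a basis_index) \<Rightarrow> 'a)"
    by (rule bij_from_basis_coords[OF assms(1,3)])
  then show ?thesis
    using assms(2)
    by (simp add: polyhedral_coordinates_def linear_coordinates_def polyhedral_coordinates_axioms_def
        linear_inv_bij[OF linear_from_basis_coords] bij_imp_bij_inv)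
qed

lemma dual_ext_trivial_space:
  assumes "\<And>x::'a::real_normed_vector. x = 0"
  shows "(dual_ext :: ('a \<Rightarrow> real) set) = {\<lambda>_. 0}"
proof -
  have zero: "f = (\<lambda>_. 0)" if "f \<in> (dual_ball :: ('a \<Rightarrow> real) set)" for f
  proof
    show "f x = 0" for x
      using assms[of x] linear_0[OF dual_ball_linear[OF that]] by simp
  qed
  have "(\<lambda>_. 0) \<in> (dual_ext :: ('a \<Rightarrow> real) set)"
    unfolding dual_ext_def
  proof (intro CollectI conjI ballI allI impI)
    show "(\<lambda>_. 0) \<in> (dual_ball :: ('a \<Rightarrow> real) set)"
      by (simp add: dual_ball_def onorm_zero)
    show "g = h" if "g \<in> dual_ball" and "h \<in> dual_ball" for g h :: "'a \<Rightarrow> real"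
      using zero[OF that(1)] zero[OF that(2)] by simp
  qed
  then show ?thesis
    using zero dual_ext_subset_dual_ball by blast
qed

lemma preserves_all_if_trivial_domain:
  fixes T :: "'a::real_normed_vector \<Rightarrow> 'b::real_normed_vector"
  assumes "linear T" and "surj T" and "\<And>x::'a. x = 0"
  shows "preserves_parallel_pairs T \<and> preserves_TEA_pairs T \<and> preserves_Sm_classes T"
proof -
  have trivial_b: "y = 0" for y :: 'b
  proof -
    obtain x where "y = T x"
      using surjD[OF assms(2)] by blast
    then show ?thesis
      using assms(3)[of x] linear_0[OF assms(1)] by simp
  qed
  have "Sm f = {}" for f :: "'a \<Rightarrow> real"
    using assms(3) by (auto simp: Sm_def)
  moreover have "parallel_pair (0::'b) 0" and "TEA_pair (0::'b) 0"
    by (auto simp: parallel_pair_def TEA_pair_def intro: exI[of _ 1])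
  ultimately show ?thesis
    using trivial_b[of "T _"]
    by (simp add: preserves_parallel_pairs_def preserves_TEA_pairs_def preserves_Sm_classes_def
        dual_ext_trivial_space[OF trivial_b])
qed

theorem mainTheorem15:
  fixes T :: "'a::real_normed_vector \<Rightarrow> 'b::real_normed_vector"
  assumes "fin_dim_space TYPE('a)" and "fin_dim_space TYPE('b)"
    and "polyhedral TYPE('a)" and "polyhedral TYPE('b)"
    and "linear T" and "bij T"
  shows "((\<forall>x y. parallel_pair x y \<longrightarrow> parallel_pair (T x) (T y))
          \<longleftrightarrow> (\<forall>x y. TEA_pair x y \<longrightarrow> TEA_pair (T x) (T y)))
       \<and> ((\<forall>x y. TEA_pair x y \<longrightarrow> TEA_pair (T x) (T y))
          \<longleftrightarrow> (\<forall>f\<in>(dual_ext :: ('a \<Rightarrow> real) set).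
                 \<exists>!g. g \<in> (dual_ext :: ('b \<Rightarrow> real) set) \<and> T ` Sm f \<subseteq> Sm g))"
proof -
  have "(preserves_parallel_pairs T \<longleftrightarrow> preserves_TEA_pairs T)
      \<and> (preserves_TEA_pairs T \<longleftrightarrow> preserves_Sm_classes T)"
  proof (cases "\<exists>x::'a. x \<noteq> 0")
    case True
    then obtain x :: 'a where "x \<noteq> 0"
      by blast
    then have "T x \<noteq> 0"
      using linear_injective_0[OF assms(5)] bij_is_inj[OF assms(6)] by blast
    then have "\<exists>y::'b. y \<noteq> 0"
      by blast
    then interpret polyhedral_isomorphism
      "inv (from_basis_coords :: real^('a basis_index) \<Rightarrow> 'a)"
      "inv (from_basis_coords :: real^('b basis_index) \<Rightarrow> 'b)" T
      using True assms
      by (intro polyhedral_isomorphism.intro polyhedral_isomorphism_axioms.intro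
          polyhedral_coordinates_exist)
    show ?thesis
      by (rule preservation_equivalences)
  next
    case False
    then show ?thesis
      using preserves_all_if_trivial_domain[OF assms(5) bij_is_surj[OF assms(6)]] by blast
  qed
  then show ?thesis
    unfolding preserves_parallel_pairs_def preserves_TEA_pairs_def preserves_Sm_classes_def .
qed

end
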